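(* Let ${\cal G}_{sym}$ be the class of scheduling games on related machines with arbitrary priority lists in which all jobs have the same processing-time function (either all $p(t)=b+at$ with $b,a\ge0$, or all $p(t)=\max\{\tau,b-at\}$ with $b,a\ge0$, $\tau>0$). Then $PoA({\cal G}_{sym})=PoS({\cal G}_{sym})=1$; that is, every game in ${\cal G}_{sym}$ has a pure Nash equilibrium and every pure Nash equilibrium has minimum makespan.
   Context: Scheduling game: a finite set $N$ of $n\ge1$ jobs (players) and a set $M$ of machines. Machine $j$ has speed $s_j>0$ and a priority list $\pi_j$, a bijection $N\to\{1,\dots,n\}$; job $u$ has higher priority than $v$ on $j$ iff $\pi_j(u)<\pi_j(v)$. A profile $\sigma\in M^N$ assigns each job to a machine. On machine $j$, the jobs assigned to it, listed in increasing $\pi_j$-order as $i_1,i_2,\dots$, are processed without idle time: $S_{i_1}(\sigma)=0$, $C_{i_k}(\sigma)=S_{i_k}(\sigma)+p_{i_k}(S_{i_k}(\sigma))/s_j$, $S_{i_{k+1}}(\sigma)=C_{i_k}(\sigma)$. The cost of job $i$ is $C_i(\sigma)$. A pure Nash equilibrium (NE) is a profile in which no job can strictly decrease its completion time by unilaterally changing its machine. Makespan $C_{\max}(\sigma)=\max_iC_i(\sigma)$; $OPT(G)=\min_\sigma C_{\max}(\sigma)$ over all profiles. For a game with at least one NE, $PoA(G)=\max_{\sigma\text{ NE}}C_{\max}(\sigma)/OPT(G)$ and $PoS(G)=\min_{\sigma\text{ NE}}C_{\max}(\sigma)/OPT(G)$; for a class, the supremum over its games. *)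

theory Defs
  imports Complex_Main "HOL-Library.FuncSet"
begin

text \<open>Jobs form a finite set N (of some type 'j), machines a finite set M (of type 'm).
  s j is the speed of machine j, pr j the priority list of machine j
  (a bijection N \<rightarrow> {1..n}), p i the processing-time function of job i.\<close>

fun process :: "('j \<Rightarrow> real \<Rightarrow> real) \<Rightarrow> real \<Rightarrow> real \<Rightarrow> 'j list \<Rightarrow> ('j \<times> real) list" where
  "process p sp t [] = []"
| "process p sp t (i # is) = (let c = t + p i t / sp in (i, c) # process p sp c is)"

definition jobs_on :: "'j set \<Rightarrow> ('m \<Rightarrow> 'j \<Rightarrow> nat) \<Rightarrow> ('j \<Rightarrow> 'm) \<Rightarrow> 'm \<Rightarrow> 'j list" where
  "jobs_on N pr sigma j =
     filter (\<lambda>u. sigma u = j) (map (inv_into N (pr j)) [1..<card N + 1])"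

definition compl :: "'j set \<Rightarrow> ('m \<Rightarrow> real) \<Rightarrow> ('m \<Rightarrow> 'j \<Rightarrow> nat) \<Rightarrow> ('j \<Rightarrow> real \<Rightarrow> real)
    \<Rightarrow> ('j \<Rightarrow> 'm) \<Rightarrow> 'j \<Rightarrow> real" where
  "compl N s pr p sigma i =
     the (map_of (process p (s (sigma i)) 0 (jobs_on N pr sigma (sigma i))) i)"

definition makespan :: "'j set \<Rightarrow> ('m \<Rightarrow> real) \<Rightarrow> ('m \<Rightarrow> 'j \<Rightarrow> nat) \<Rightarrow> ('j \<Rightarrow> real \<Rightarrow> real)
    \<Rightarrow> ('j \<Rightarrow> 'm) \<Rightarrow> real" where
  "makespan N s pr p sigma = Max (compl N s pr p sigma ` N)"

definition valid_game :: "'j set \<Rightarrow> 'm set \<Rightarrow> ('m \<Rightarrow> real) \<Rightarrow> ('m \<Rightarrow> 'j \<Rightarrow> nat) \<Rightarrow> bool" where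
  "valid_game N M s pr \<longleftrightarrow> finite N \<and> N \<noteq> {} \<and> finite M \<and> M \<noteq> {} \<and>
     (\<forall>j\<in>M. s j > 0) \<and> (\<forall>j\<in>M. bij_betw (pr j) N {1..card N})"

definition is_NE :: "'j set \<Rightarrow> 'm set \<Rightarrow> ('m \<Rightarrow> real) \<Rightarrow> ('m \<Rightarrow> 'j \<Rightarrow> nat)
    \<Rightarrow> ('j \<Rightarrow> real \<Rightarrow> real) \<Rightarrow> ('j \<Rightarrow> 'm) \<Rightarrow> bool" where
  "is_NE N M s pr p sigma \<longleftrightarrow> sigma \<in> N \<rightarrow> M \<and>
     (\<forall>i\<in>N. \<forall>j'\<in>M. \<not> (compl N s pr p (sigma(i := j')) i < compl N s pr p sigma i))"

definition sym_ptime :: "(real \<Rightarrow> real) \<Rightarrow> bool" where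
  "sym_ptime q \<longleftrightarrow>
     (\<exists>a b. a \<ge> 0 \<and> b \<ge> 0 \<and> q = (\<lambda>t. b + a * t)) \<or>
     (\<exists>a b \<tau>. a \<ge> 0 \<and> b \<ge> 0 \<and> \<tau> > 0 \<and> q = (\<lambda>t. max \<tau> (b - a * t)))"

end

theory Submission
  imports Defs
begin

text \<open>When all jobs share the processing-time function q, a job's completion time depends only
  on its machine j and the number k of jobs ahead of it there: it is the (k+1)-st iterate of
  t \<mapsto> t + q t / s j from 0, nondecreasing in k because q \<ge> 0.
  An equilibrium is built greedily: repeatedly let the machine whose next slot finishes earliest
  take its highest-priority unassigned job. For optimality, the makespan of any profile is the
  latest finishing time of the last slots, so it depends only on the loads. In an equilibrium
  the next free slot of every machine ends no earlier than the makespan C; a profile finishing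
  before C would therefore put at most as many jobs on every machine, and strictly fewer on one
  attaining C, than the equilibrium does, which is impossible with the same number of jobs.\<close>

definition next_completion :: "(real \<Rightarrow> real) \<Rightarrow> real \<Rightarrow> real \<Rightarrow> real" where
  "next_completion q sp t = t + q t / sp"

definition slot_time :: "(real \<Rightarrow> real) \<Rightarrow> real \<Rightarrow> nat \<Rightarrow> real" where
  "slot_time q sp k = (next_completion q sp ^^ k) 0"

definition jobs_ahead :: "'j set \<Rightarrow> ('m \<Rightarrow> 'j \<Rightarrow> nat) \<Rightarrow> ('j \<Rightarrow> 'm) \<Rightarrow> 'm \<Rightarrow> 'j \<Rightarrow> nat" where
  "jobs_ahead A pr sigma j i = card {u\<in>A. sigma u = j \<and> pr j u < pr j i}"

definition load :: "'j set \<Rightarrow> ('j \<Rightarrow> 'm) \<Rightarrow> 'm \<Rightarrow> nat" where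
  "load A sigma j = card {u\<in>A. sigma u = j}"

lemma slot_time_0 [simp]: "slot_time q sp 0 = 0"
  by (simp add: slot_time_def)

lemma slot_time_mono:
  assumes "\<And>t. 0 \<le> t \<Longrightarrow> 0 \<le> q t" and "sp > 0"
  shows "mono (slot_time q sp)"
proof -
  have "0 \<le> slot_time q sp k \<and> slot_time q sp k \<le> slot_time q sp (Suc k)" for k
    by (induction k) (use assms in \<open>auto simp: slot_time_def next_completion_def\<close>)
  then show ?thesis
    unfolding mono_def by (metis lift_Suc_mono_le)
qed

lemma map_of_process_identical_ptime:
  "i \<in> set xs \<Longrightarrow> map_of (process (\<lambda>_. q) sp t xs) i
     = Some ((next_completion q sp ^^ Suc (length (takeWhile (\<lambda>x. x \<noteq> i) xs))) t)"
proof (induction xs arbitrary: t)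
  case (Cons x xs)
  then show ?case
    by (cases "x = i") (simp_all add: Let_def next_completion_def funpow_Suc_right del: funpow.simps)
qed simp

lemma takeWhile_neq_eq_filter:
  fixes f :: "'a \<Rightarrow> 'b::order"
  assumes "sorted_wrt (\<lambda>u v. f u < f v) xs" and "i \<in> set xs"
  shows "takeWhile (\<lambda>x. x \<noteq> i) xs = filter (\<lambda>u. f u < f i) xs"
  using assms
proof (induction xs)
  case (Cons x xs)
  show ?case
  proof (cases "x = i")
    case True
    with Cons.prems(1) show ?thesis by (auto intro!: filter_False[symmetric] dest: less_asym)
  next
    case False
    with Cons show ?thesis by auto
  qed
qed simp

lemma sorted_wrt_less_imp_distinct:
  fixes f :: "'a \<Rightarrow> 'b::linorder"
  shows "sorted_wrt (\<lambda>u v. f u < f v) xs \<Longrightarrow> distinct xs"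
  by (simp add: sorted_wrt_map[symmetric] strict_sorted_iff distinct_map)

context
  fixes N :: "'j set" and pr :: "'m \<Rightarrow> 'j \<Rightarrow> nat" and j :: 'm
  assumes bij: "bij_betw (pr j) N {1..card N}"
begin

lemma set_jobs_on: "set (jobs_on N pr sigma j) = {u\<in>N. sigma u = j}"
proof -
  have "inv_into N (pr j) ` {1..card N} = N"
    using bij_betw_inv_into[OF bij] by (simp add: bij_betw_def)
  moreover have "set [1..<card N + 1] = {1..card N}" by auto
  ultimately show ?thesis unfolding jobs_on_def by auto
qed

lemma sorted_jobs_on: "sorted_wrt (\<lambda>u v. pr j u < pr j v) (jobs_on N pr sigma j)"
proof -
  have inv_cancel: "pr j (inv_into N (pr j) k) = k" if "k \<in> {1..card N}" for k
    using bij that by (simp add: bij_betw_def f_inv_into_f)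
  have "sorted_wrt (\<lambda>u v. pr j u < pr j v) (map (inv_into N (pr j)) [1..<card N + 1])"
    unfolding sorted_wrt_map by (rule sorted_wrt_mono_rel[OF _ sorted_wrt_upt]) (auto simp: inv_cancel)
  then show ?thesis unfolding jobs_on_def by (rule sorted_wrt_filter)
qed

end

lemma compl_identical_ptime:
  assumes "bij_betw (pr (sigma i)) N {1..card N}" and "i \<in> N"
  shows "compl N s pr (\<lambda>_. q) sigma i
    = slot_time q (s (sigma i)) (Suc (jobs_ahead N pr sigma (sigma i) i))"
proof -
  let ?j = "sigma i"
  let ?xs = "jobs_on N pr sigma ?j"
  have sorted: "sorted_wrt (\<lambda>u v. pr ?j u < pr ?j v) ?xs" and i: "i \<in> set ?xs"
    using sorted_jobs_on[where pr = pr and j = ?j, OF assms(1)]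
      set_jobs_on[where pr = pr and j = ?j, OF assms(1)] assms(2)
    by auto
  have "length (takeWhile (\<lambda>x. x \<noteq> i) ?xs) = length (filter (\<lambda>u. pr ?j u < pr ?j i) ?xs)"
    by (simp only: takeWhile_neq_eq_filter[OF sorted i])
  also have "\<dots> = jobs_ahead N pr sigma ?j i"
    using distinct_length_filter[OF sorted_wrt_less_imp_distinct[OF sorted]]
    by (simp add: jobs_ahead_def set_jobs_on[where pr = pr and j = ?j, OF assms(1)] Int_def conj_commute)
  finally show ?thesis
    by (simp add: compl_def slot_time_def map_of_process_identical_ptime[OF i])
qed

lemma jobs_ahead_fun_upd: "jobs_ahead A pr (sigma(i := j)) j i = jobs_ahead A pr sigma j i"
  unfolding jobs_ahead_def by (rule arg_cong[where f = card]) auto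

lemma jobs_ahead_le_load: "finite A \<Longrightarrow> jobs_ahead A pr sigma j i \<le> load A sigma j"
  unfolding jobs_ahead_def load_def by (rule card_mono) auto

lemma jobs_ahead_less_load:
  "finite A \<Longrightarrow> i \<in> A \<Longrightarrow> jobs_ahead A pr sigma (sigma i) i < load A sigma (sigma i)"
  unfolding jobs_ahead_def load_def by (rule psubset_card_mono) auto

lemma sum_load:
  assumes "finite A" "finite M" "sigma \<in> A \<rightarrow> M"
  shows "(\<Sum>j\<in>M. load A sigma j) = card A"
proof -
  have "(\<Sum>j\<in>M. \<Sum>u\<in>{u\<in>A. sigma u = j}. 1) = (\<Sum>u\<in>A. 1::nat)"
    by (rule sum.group) (use assms in auto)
  then show ?thesis unfolding load_def by simp
qed

lemma exists_last_job:
  assumes "finite A" and "inj_on (pr j) A" and "load A sigma j \<noteq> 0"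
  shows "\<exists>i\<in>A. sigma i = j \<and> Suc (jobs_ahead A pr sigma j i) = load A sigma j"
proof -
  let ?S = "{u\<in>A. sigma u = j}"
  have "finite ?S" "?S \<noteq> {}" using assms(1,3) by (auto simp: load_def)
  then obtain i where i: "i \<in> ?S" "\<forall>u\<in>?S. pr j u \<le> pr j i"
    using Max_in[of "pr j ` ?S"] Max_ge[of "pr j ` ?S"] by fastforce
  have "{u\<in>A. sigma u = j \<and> pr j u < pr j i} = ?S - {i}"
    using i inj_onD[OF assms(2)] by (force simp: order.strict_iff_order)
  moreover have "card ?S = Suc (card (?S - {i}))"
    using i \<open>finite ?S\<close> by (intro card.remove) auto
  ultimately have "Suc (jobs_ahead A pr sigma j i) = load A sigma j"
    unfolding jobs_ahead_def load_def by simp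
  then show ?thesis using i by blast
qed

text \<open>For F j = slot_time q (s j) and A = N this is the Nash condition; for A \<subset> N it is the
  Nash condition of the game restricted to the jobs assigned so far by the greedy construction.\<close>

definition stable_assignment ::
    "'j set \<Rightarrow> 'm set \<Rightarrow> ('m \<Rightarrow> 'j \<Rightarrow> nat) \<Rightarrow> ('m \<Rightarrow> nat \<Rightarrow> 'a::linorder) \<Rightarrow> ('j \<Rightarrow> 'm) \<Rightarrow> bool" where
  "stable_assignment A M pr F sigma \<longleftrightarrow> sigma ` A \<subseteq> M \<and>
     (\<forall>i\<in>A. \<forall>j\<in>M. F (sigma i) (Suc (jobs_ahead A pr sigma (sigma i) i)) \<le> F j (Suc (jobs_ahead A pr sigma j i)))"

text \<open>This invariant of the greedy construction ensures that later jobs never delay earlier ones.\<close>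

definition assigned_first :: "'j set \<Rightarrow> 'j set \<Rightarrow> ('m \<Rightarrow> 'j \<Rightarrow> nat) \<Rightarrow> ('j \<Rightarrow> 'm) \<Rightarrow> bool" where
  "assigned_first N A pr sigma \<longleftrightarrow> (\<forall>u\<in>A. \<forall>w\<in>N - A. pr (sigma u) u < pr (sigma u) w)"

lemma stable_assignment_insert:
  assumes stable: "stable_assignment A M pr F sigma" and first: "assigned_first N A pr sigma"
    and fin: "finite A" and v: "v \<in> N - A" and mono: "\<forall>j\<in>M. mono (F j)"
    and js: "js \<in> M" "\<forall>j\<in>M. F js (Suc (load A sigma js)) \<le> F j (Suc (load A sigma j))"
  shows "stable_assignment (insert v A) M pr F (sigma(v := js))"
proof -
  let ?A = "insert v A" and ?sigma = "sigma(v := js)"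
  have ahead_mono: "jobs_ahead A pr sigma j i \<le> jobs_ahead ?A pr ?sigma j i" for j i
    unfolding jobs_ahead_def by (rule card_mono) (use fin v in auto)
  have ahead_old: "jobs_ahead ?A pr ?sigma (sigma i) i = jobs_ahead A pr sigma (sigma i) i"
    if "i \<in> A" for i
  proof -
    have "pr (sigma i) i < pr (sigma i) v" using first that v unfolding assigned_first_def by blast
    then show ?thesis unfolding jobs_ahead_def
      by (intro arg_cong[where f = card]) (use v in auto)
  qed
  have ahead_new: "jobs_ahead ?A pr ?sigma j v = load A sigma j" for j
    unfolding jobs_ahead_def load_def
    by (intro arg_cong[where f = card]) (use first v in \<open>auto simp: assigned_first_def\<close>)
  have "F (?sigma i) (Suc (jobs_ahead ?A pr ?sigma (?sigma i) i)) \<le> F j (Suc (jobs_ahead ?A pr ?sigma j i))"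
    if i: "i \<in> ?A" and j: "j \<in> M" for i j
  proof (cases "i = v")
    case True
    then show ?thesis using js j by (simp add: ahead_new)
  next
    case False
    then have "i \<in> A" "?sigma i = sigma i" using i by auto
    moreover have "F j (Suc (jobs_ahead A pr sigma j i)) \<le> F j (Suc (jobs_ahead ?A pr ?sigma j i))"
      using mono j ahead_mono by (simp add: monoD)
    ultimately show ?thesis
      using stable j unfolding stable_assignment_def by (fastforce simp: ahead_old)
  qed
  moreover have "?sigma ` ?A \<subseteq> M" using stable js unfolding stable_assignment_def by auto
  ultimately show ?thesis unfolding stable_assignment_def by blast
qed

lemma assigned_first_insert:
  assumes first: "assigned_first N A pr sigma" and v: "v \<in> N - A"
    and inj: "inj_on (pr js) N" and least: "\<forall>w\<in>N - A. pr js v \<le> pr js w"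
  shows "assigned_first N (insert v A) pr (sigma(v := js))"
  unfolding assigned_first_def
proof (intro ballI)
  fix u w assume u: "u \<in> insert v A" and w: "w \<in> N - insert v A"
  show "pr ((sigma(v := js)) u) u < pr ((sigma(v := js)) u) w"
  proof (cases "u = v")
    case True
    have "pr js v \<noteq> pr js w" using inj v w inj_on_eq_iff by fastforce
    then show ?thesis using True least w by (simp add: order.strict_iff_order)
  next
    case False
    then show ?thesis using first u w unfolding assigned_first_def by auto
  qed
qed

lemma stable_assignment_exists:
  assumes "finite N" "finite M" "M \<noteq> {}"
    and inj: "\<forall>j\<in>M. inj_on (pr j) N" and mono: "\<forall>j\<in>M. mono (F j)"
  shows "\<exists>sigma. stable_assignment N M pr F sigma"
proof -
  have "\<exists>A sigma. A \<subseteq> N \<and> card A = k \<and> stable_assignment A M pr F sigma \<and> assigned_first N A pr sigma"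
    if "k \<le> card N" for k
    using that
  proof (induction k)
    case 0
    show ?case by (intro exI[of _ "{}"]) (simp add: stable_assignment_def assigned_first_def)
  next
    case (Suc k)
    then obtain A sigma where A: "A \<subseteq> N" "card A = k"
      and stable: "stable_assignment A M pr F sigma" and first: "assigned_first N A pr sigma"
      by auto
    have fin: "finite A" using A \<open>finite N\<close> finite_subset by blast
    have "N - A \<noteq> {}" using A Suc.prems by auto
    define js where "js = arg_min_on (\<lambda>j. F j (Suc (load A sigma j))) M"
    have js: "js \<in> M" "\<forall>j\<in>M. F js (Suc (load A sigma js)) \<le> F j (Suc (load A sigma j))"
      using arg_min_if_finite[OF \<open>finite M\<close> \<open>M \<noteq> {}\<close>, where f = "\<lambda>j. F j (Suc (load A sigma j))"]
      unfolding js_def by (auto simp: not_less)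
    define v where "v = arg_min_on (pr js) (N - A)"
    have v: "v \<in> N - A" "\<forall>w\<in>N - A. pr js v \<le> pr js w"
      using arg_min_if_finite[of "N - A" "pr js"] \<open>finite N\<close> \<open>N - A \<noteq> {}\<close>
      unfolding v_def by (auto simp: not_less)
    show ?case
    proof (intro exI conjI)
      show "insert v A \<subseteq> N" "card (insert v A) = Suc k" using A fin v by auto
      show "stable_assignment (insert v A) M pr F (sigma(v := js))"
        by (rule stable_assignment_insert[OF stable first fin v(1) mono js])
      show "assigned_first N (insert v A) pr (sigma(v := js))"
        using assigned_first_insert[OF first v(1) _ v(2)] inj js(1) by blast
    qed
  qed
  then obtain A sigma where "A \<subseteq> N" "card A = card N" "stable_assignment A M pr F sigma"
    by blast
  then show ?thesis using \<open>finite N\<close> card_subset_eq by metis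
qed

lemma balanced_load_minimizes_Max:
  fixes F :: "'m \<Rightarrow> nat \<Rightarrow> 'a::linorder" and L L' :: "'m \<Rightarrow> nat"
  assumes M: "finite M" "M \<noteq> {}" and mono: "\<forall>j\<in>M. mono (F j)"
    and same_total: "(\<Sum>j\<in>M. L' j) = (\<Sum>j\<in>M. L j)"
    and balanced: "\<forall>j\<in>M. Max ((\<lambda>j. F j (L j)) ` M) \<le> F j (Suc (L j))"
  shows "Max ((\<lambda>j. F j (L j)) ` M) \<le> Max ((\<lambda>j. F j (L' j)) ` M)"
proof (rule ccontr)
  let ?C = "Max ((\<lambda>j. F j (L j)) ` M)"
  assume contra: "\<not> ?C \<le> Max ((\<lambda>j. F j (L' j)) ` M)"
  have below: "F j (L' j) < ?C" if "j \<in> M" for j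
  proof -
    have "F j (L' j) \<le> Max ((\<lambda>j. F j (L' j)) ` M)" using M that by (intro Max_ge) auto
    then show ?thesis using contra by simp
  qed
  have le: "L' j \<le> L j" if j: "j \<in> M" for j
  proof (rule ccontr)
    assume "\<not> L' j \<le> L j"
    then have "F j (Suc (L j)) \<le> F j (L' j)" using mono j by (simp add: monoD)
    then show False using balanced below j by (meson leD order.trans)
  qed
  have "?C \<in> (\<lambda>j. F j (L j)) ` M" using M by (intro Max_in) auto
  then obtain j0 where j0: "j0 \<in> M" "F j0 (L j0) = ?C" by auto
  have "L' j0 < L j0"
  proof (rule ccontr)
    assume "\<not> L' j0 < L j0"
    then have "F j0 (L j0) \<le> F j0 (L' j0)" using mono j0(1) by (simp add: monoD)
    then show False using below[OF j0(1)] j0(2) by simp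
  qed
  then have "(\<Sum>j\<in>M. L' j) < (\<Sum>j\<in>M. L j)"
    using sum_strict_mono_ex1[OF M(1)] le j0(1) by blast
  then show False using same_total by simp
qed

context
  fixes N :: "'j set" and M :: "'m set" and s :: "'m \<Rightarrow> real"
    and pr :: "'m \<Rightarrow> 'j \<Rightarrow> nat" and q :: "real \<Rightarrow> real"
  assumes game: "valid_game N M s pr" and q_nonneg: "\<And>t. 0 \<le> t \<Longrightarrow> 0 \<le> q t"
begin

lemma compl_eq_slot_time:
  "i \<in> N \<Longrightarrow> sigma i \<in> M \<Longrightarrow>
    compl N s pr (\<lambda>_. q) sigma i = slot_time q (s (sigma i)) (Suc (jobs_ahead N pr sigma (sigma i) i))"
  using game by (intro compl_identical_ptime) (auto simp: valid_game_def)

lemma slot_time_machine_mono: "j \<in> M \<Longrightarrow> mono (slot_time q (s j))"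
  using game q_nonneg by (intro slot_time_mono) (auto simp: valid_game_def)

lemma stable_assignment_imp_NE:
  assumes stable: "stable_assignment N M pr (\<lambda>j. slot_time q (s j)) sigma"
  shows "is_NE N M s pr (\<lambda>_. q) sigma"
  unfolding is_NE_def
proof (intro conjI ballI)
  show sigma: "sigma \<in> N \<rightarrow> M" using stable unfolding stable_assignment_def by auto
  fix i j assume i: "i \<in> N" and j: "j \<in> M"
  have "compl N s pr (\<lambda>_. q) sigma i \<le> slot_time q (s j) (Suc (jobs_ahead N pr sigma j i))"
    using stable i j sigma by (auto simp: stable_assignment_def compl_eq_slot_time)
  also have "\<dots> = compl N s pr (\<lambda>_. q) (sigma(i := j)) i"
    using i j by (simp add: compl_eq_slot_time jobs_ahead_fun_upd)
  finally show "\<not> compl N s pr (\<lambda>_. q) (sigma(i := j)) i < compl N s pr (\<lambda>_. q) sigma i"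
    by simp
qed

lemma NE_exists: "\<exists>sigma. is_NE N M s pr (\<lambda>_. q) sigma"
proof -
  have "\<exists>sigma. stable_assignment N M pr (\<lambda>j. slot_time q (s j)) sigma"
    using game slot_time_machine_mono
    by (intro stable_assignment_exists) (auto simp: valid_game_def bij_betw_def)
  then show ?thesis using stable_assignment_imp_NE by blast
qed

lemma makespan_eq_Max_slot_time_load:
  assumes sigma: "sigma \<in> N \<rightarrow> M"
  shows "makespan N s pr (\<lambda>_. q) sigma = Max ((\<lambda>j. slot_time q (s j) (load N sigma j)) ` M)"
proof -
  have N: "finite N" "N \<noteq> {}" and M: "finite M" "M \<noteq> {}" and inj: "\<And>j. j \<in> M \<Longrightarrow> inj_on (pr j) N"
    using game by (auto simp: valid_game_def bij_betw_def)
  have compl_le: "compl N s pr (\<lambda>_. q) sigma i \<le> slot_time q (s (sigma i)) (load N sigma (sigma i))"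
    if i: "i \<in> N" for i
  proof -
    have "sigma i \<in> M" using sigma i by blast
    moreover have "Suc (jobs_ahead N pr sigma (sigma i) i) \<le> load N sigma (sigma i)"
      using jobs_ahead_less_load[OF N(1) i, where pr = pr and sigma = sigma] by simp
    ultimately show ?thesis
      using i slot_time_machine_mono by (simp add: compl_eq_slot_time monoD)
  qed
  have slot_le: "slot_time q (s j) (load N sigma j) \<le> makespan N s pr (\<lambda>_. q) sigma" if j: "j \<in> M" for j
  proof (cases "load N sigma j = 0")
    case True
    obtain i where i: "i \<in> N" using N by auto
    have "sigma i \<in> M" using i sigma by blast
    then have "slot_time q (s (sigma i)) 0 \<le> compl N s pr (\<lambda>_. q) sigma i"
      using i slot_time_machine_mono by (simp add: compl_eq_slot_time monoD del: slot_time_0)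
    then show ?thesis
      using True i N by (auto simp: makespan_def intro: order.trans)
  next
    case False
    then obtain i where i: "i \<in> N" "sigma i = j" "Suc (jobs_ahead N pr sigma j i) = load N sigma j"
      using exists_last_job[where pr = pr and j = j, OF N(1) inj[OF j]] by blast
    then have "slot_time q (s j) (load N sigma j) = compl N s pr (\<lambda>_. q) sigma i"
      using j by (simp add: compl_eq_slot_time)
    then show ?thesis
      unfolding makespan_def using i(1) N(1) by (simp add: Max_ge)
  qed
  have "compl N s pr (\<lambda>_. q) sigma i \<le> Max ((\<lambda>j. slot_time q (s j) (load N sigma j)) ` M)"
    if i: "i \<in> N" for i
  proof -
    have "slot_time q (s (sigma i)) (load N sigma (sigma i)) \<le> Max ((\<lambda>j. slot_time q (s j) (load N sigma j)) ` M)"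
      using M(1) i sigma by (intro Max_ge) auto
    then show ?thesis by (rule order.trans[OF compl_le[OF i]])
  qed
  then show ?thesis
    using N M slot_le unfolding makespan_def by (intro antisym) (simp_all add: Max_le_iff)
qed

lemma NE_makespan_le_slot_time:
  assumes NE: "is_NE N M s pr (\<lambda>_. q) sigma" and j: "j \<in> M"
  shows "makespan N s pr (\<lambda>_. q) sigma \<le> slot_time q (s j) (Suc (load N sigma j))"
proof -
  have N: "finite N" "N \<noteq> {}" using game by (auto simp: valid_game_def)
  have "makespan N s pr (\<lambda>_. q) sigma \<in> compl N s pr (\<lambda>_. q) sigma ` N"
    unfolding makespan_def using N by (intro Max_in) auto
  then obtain i where i: "i \<in> N" "makespan N s pr (\<lambda>_. q) sigma = compl N s pr (\<lambda>_. q) sigma i"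
    by auto
  have "compl N s pr (\<lambda>_. q) sigma i \<le> compl N s pr (\<lambda>_. q) (sigma(i := j)) i"
    using NE i(1) j unfolding is_NE_def by (simp add: not_less)
  also have "\<dots> = slot_time q (s j) (Suc (jobs_ahead N pr sigma j i))"
    using i(1) j by (simp add: compl_eq_slot_time jobs_ahead_fun_upd)
  also have "\<dots> \<le> slot_time q (s j) (Suc (load N sigma j))"
    using jobs_ahead_le_load[OF N(1), where pr = pr and sigma = sigma and j = j and i = i]
      slot_time_machine_mono[OF j] by (simp add: monoD)
  finally show ?thesis using i(2) by simp
qed

lemma NE_minimizes_makespan:
  assumes NE: "is_NE N M s pr (\<lambda>_. q) sigma" and sigma': "sigma' \<in> N \<rightarrow> M"
  shows "makespan N s pr (\<lambda>_. q) sigma \<le> makespan N s pr (\<lambda>_. q) sigma'"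
proof -
  have sigma: "sigma \<in> N \<rightarrow> M" using NE unfolding is_NE_def by blast
  have N: "finite N" and M: "finite M" "M \<noteq> {}" using game by (auto simp: valid_game_def)
  show ?thesis
    unfolding makespan_eq_Max_slot_time_load[OF sigma] makespan_eq_Max_slot_time_load[OF sigma']
  proof (rule balanced_load_minimizes_Max[OF M])
    show "\<forall>j\<in>M. mono (slot_time q (s j))" using slot_time_machine_mono by blast
    show "(\<Sum>j\<in>M. load N sigma' j) = (\<Sum>j\<in>M. load N sigma j)"
      using sum_load[OF N M(1)] sigma sigma' by simp
    show "\<forall>j\<in>M. Max ((\<lambda>j. slot_time q (s j) (load N sigma j)) ` M) \<le> slot_time q (s j) (Suc (load N sigma j))"
      using NE_makespan_le_slot_time[OF NE] makespan_eq_Max_slot_time_load[OF sigma] by simp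
  qed
qed

end

lemma sym_ptime_nonneg: "sym_ptime q \<Longrightarrow> 0 \<le> t \<Longrightarrow> 0 \<le> q t"
  unfolding sym_ptime_def by auto

theorem theorem8:
  fixes N :: "'j set" and M :: "'m set" and s :: "'m \<Rightarrow> real"
    and pr :: "'m \<Rightarrow> 'j \<Rightarrow> nat" and q :: "real \<Rightarrow> real"
  assumes "valid_game N M s pr" and "sym_ptime q"
  shows "(\<exists>sigma. is_NE N M s pr (\<lambda>_. q) sigma) \<and>
         (\<forall>sigma. is_NE N M s pr (\<lambda>_. q) sigma \<longrightarrow>
            (\<forall>sigma'\<in>N \<rightarrow> M. makespan N s pr (\<lambda>_. q) sigma \<le> makespan N s pr (\<lambda>_. q) sigma'))"
proof -
  have "\<And>t. 0 \<le> t \<Longrightarrow> 0 \<le> q t" using assms(2) by (rule sym_ptime_nonneg)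
  then show ?thesis using NE_exists[OF assms(1)] NE_minimizes_makespan[OF assms(1)] by blast
qed

end
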